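(* Let $M$ be a non-expandable A-primitive star matrix of a partition of the hypercube ${\bf Z}_q^n$ into subcubes all of the same dimension. Then for every column $c$ of $M$, the number of entries of $c$ lying in ${\bf Z}_q$ is a power of $q$, and there is a transfractal $T$ of $M$ whose leading column is $c$ and whose set of rows is exactly the set of rows in which $c$ has an entry from ${\bf Z}_q$.
   Context: A subcube of ${\bf Z}_q^n$ is obtained by fixing some coordinates and letting the others run through ${\bf Z}_q$; its dimension is the number of free coordinates, and its star pattern is the vector over ${\bf Z}_q\cup\{*\}$ with fixed values in fixed coordinates and $*$ in free ones. The star matrix of a partition of ${\bf Z}_q^n$ into subcubes is the matrix whose rows are the star patterns of the subcubes. It is A-primitive if no column consists only of $*$. Bang: given such an A-primitive star matrix $M$ of a partition into subcubes of equal dimension, a column $i$ and $a\in{\bf Z}_q$, the bang of $M$ at $(i,a)$ is obtained by: (1) deleting column $i$; (2) deleting all rows having in column $i$ a value of ${\bf Z}_q$ different from $a$; (3) replacing each row having $a$ in column $i$ by $q$ identical copies; (4) for each such group of $q$ copies, adjoining a new column having the values $0,1,\dots,q-1$ (each once) in the rows of that group and $*$ in all other rows; (5) deleting all columns consisting only of $*$. (The result is again an A-primitive star matrix of a partition into the same number of subcubes of equal dimension.) $M$ is expandable if some bang of $M$ has more columns than $M$, and non-expandable otherwise. Fractal matrices: $M_{q,0}$ has one row and zero columns; for $m\ge1$, $M_{q,m}$ consists of $q$ horizontal blocks indexed by $a=0,\dots,q-1$, each with $q^{m-1}$ rows; its first column has entry $a$ in every row of block $a$; its remaining columns are divided into $q$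 vertical stripes of width equal to the number of columns of $M_{q,m-1}$, and in block $a$ the $a$-th stripe is a copy of $M_{q,m-1}$ while other stripes of block $a$ are all $*$. A fractal matrix is any matrix obtained from some $M_{q,m}$ ($m\ge1$) by permuting rows and columns. A submatrix $T$ of $M$ (a set of rows and a set of columns, not necessarily consecutive) is a transfractal if $T$ is a fractal matrix and each column of $M$ used by $T$ contains only $*$ in all rows of $M$ not used by $T$. The leading column of a transfractal is its unique column containing elements of ${\bf Z}_q$ in all rows of $T$. *)

theory Defs
  imports Main
begin

text \<open>A star matrix is given by a set of row indices R, a set of column indices C and
  entries M r j :: nat option, where None stands for * and Some a for a \<in> Z_q (a < q).\<close>

definition star_entries_ok :: "nat \<Rightarrow> 'r set \<Rightarrow> 'c set \<Rightarrow> ('r \<Rightarrow> 'c \<Rightarrow> nat option) \<Rightarrow> bool" where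
  "star_entries_ok q R C M \<longleftrightarrow> (\<forall>r\<in>R. \<forall>j\<in>C. \<forall>a. M r j = Some a \<longrightarrow> a < q)"

definition in_subcube :: "'c set \<Rightarrow> ('r \<Rightarrow> 'c \<Rightarrow> nat option) \<Rightarrow> 'r \<Rightarrow> ('c \<Rightarrow> nat) \<Rightarrow> bool" where
  "in_subcube C M r x \<longleftrightarrow> (\<forall>j\<in>C. M r j = None \<or> M r j = Some (x j))"

definition star_partition :: "nat \<Rightarrow> 'r set \<Rightarrow> 'c set \<Rightarrow> ('r \<Rightarrow> 'c \<Rightarrow> nat option) \<Rightarrow> bool" where
  "star_partition q R C M \<longleftrightarrow> finite R \<and> finite C \<and> star_entries_ok q R C M \<and>
     (\<forall>x. (\<forall>j\<in>C. x j < q) \<longrightarrow> (\<exists>!r. r \<in> R \<and> in_subcube C M r x))"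

definition equal_dimension :: "'r set \<Rightarrow> 'c set \<Rightarrow> ('r \<Rightarrow> 'c \<Rightarrow> nat option) \<Rightarrow> bool" where
  "equal_dimension R C M \<longleftrightarrow> (\<exists>d. \<forall>r\<in>R. card {j\<in>C. M r j = None} = d)"

definition A_primitive :: "'r set \<Rightarrow> 'c set \<Rightarrow> ('r \<Rightarrow> 'c \<Rightarrow> nat option) \<Rightarrow> bool" where
  "A_primitive R C M \<longleftrightarrow> (\<forall>j\<in>C. \<exists>r\<in>R. M r j \<noteq> None)"

text \<open>Rows of the result: (r,0) for rows r with * in column i, and
  (r,k), k<q, for the q copies of rows r with a in column i. Columns: Inl j for old columns
  j \<noteq> i, Inr r for the new column adjoined to the group of copies of row r; finally the
  all-* columns are deleted.\<close>
definition bang_rows :: "nat \<Rightarrow> 'r set \<Rightarrow> ('r \<Rightarrow> 'c \<Rightarrow> nat option) \<Rightarrow> 'c \<Rightarrow> nat \<Rightarrow> ('r \<times> nat) set" where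
  "bang_rows q R M i a = {(r, k). r \<in> R \<and> M r i = None \<and> k = 0} \<union> {(r, k). r \<in> R \<and> M r i = Some a \<and> k < q}"

definition bang_ent :: "('r \<Rightarrow> 'c \<Rightarrow> nat option) \<Rightarrow> 'c \<Rightarrow> nat \<Rightarrow> ('r \<times> nat) \<Rightarrow> ('c + 'r) \<Rightarrow> nat option" where
  "bang_ent M i a rk col = (case col of
      Inl j \<Rightarrow> M (fst rk) j
    | Inr r' \<Rightarrow> (if fst rk = r' \<and> M r' i = Some a then Some (snd rk) else None))"

definition bang_cols :: "nat \<Rightarrow> 'r set \<Rightarrow> 'c set \<Rightarrow> ('r \<Rightarrow> 'c \<Rightarrow> nat option) \<Rightarrow> 'c \<Rightarrow> nat \<Rightarrow> ('c + 'r) set" where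
  "bang_cols q R C M i a =
     {col \<in> Inl ` (C - {i}) \<union> Inr ` {r \<in> R. M r i = Some a}.
        \<exists>rk \<in> bang_rows q R M i a. bang_ent M i a rk col \<noteq> None}"

definition expandable :: "nat \<Rightarrow> 'r set \<Rightarrow> 'c set \<Rightarrow> ('r \<Rightarrow> 'c \<Rightarrow> nat option) \<Rightarrow> bool" where
  "expandable q R C M \<longleftrightarrow> (\<exists>i\<in>C. \<exists>a<q. card (bang_cols q R C M i a) > card C)"

text \<open>Fractal matrices M_{q,m}: rows 0..<q^m, columns 0..<fractal_width q m.
  Block a consists of rows a*q^(m-1) .. (a+1)*q^(m-1)-1; column 0 is the first column,
  columns 1.. are divided into q stripes of width fractal_width q (m-1).\<close>
fun fractal_width :: "nat \<Rightarrow> nat \<Rightarrow> nat" where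
  "fractal_width q 0 = 0"
| "fractal_width q (Suc m) = 1 + q * fractal_width q m"

fun fractal :: "nat \<Rightarrow> nat \<Rightarrow> nat \<Rightarrow> nat \<Rightarrow> nat option" where
  "fractal q 0 r j = None"
| "fractal q (Suc m) r j =
     (let a = r div q ^ m; r' = r mod q ^ m in
      if j = 0 then Some a
      else (let j' = j - 1; w = fractal_width q m in
            if j' div w = a then fractal q m r' (j' mod w) else None))"

definition is_fractal :: "nat \<Rightarrow> ('r \<Rightarrow> 'c \<Rightarrow> nat option) \<Rightarrow> 'r set \<Rightarrow> 'c set \<Rightarrow> bool" where
  "is_fractal q M R' C' \<longleftrightarrow> (\<exists>m\<ge>1. \<exists>\<rho> \<gamma>. bij_betw \<rho> R' {..<q ^ m} \<and> bij_betw \<gamma> C' {..<fractal_width q m} \<and>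
      (\<forall>r\<in>R'. \<forall>j\<in>C'. M r j = fractal q m (\<rho> r) (\<gamma> j)))"

definition transfractal :: "nat \<Rightarrow> 'r set \<Rightarrow> 'c set \<Rightarrow> ('r \<Rightarrow> 'c \<Rightarrow> nat option) \<Rightarrow> 'r set \<Rightarrow> 'c set \<Rightarrow> bool" where
  "transfractal q R C M R' C' \<longleftrightarrow> R' \<subseteq> R \<and> C' \<subseteq> C \<and> is_fractal q M R' C' \<and>
     (\<forall>j\<in>C'. \<forall>r\<in>R - R'. M r j = None)"

definition leading_column :: "('r \<Rightarrow> 'c \<Rightarrow> nat option) \<Rightarrow> 'r set \<Rightarrow> 'c set \<Rightarrow> 'c \<Rightarrow> bool" where
  "leading_column M R' C' c \<longleftrightarrow> c \<in> C' \<and> (\<forall>r\<in>R'. M r c \<noteq> None) \<and>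
     (\<forall>c'\<in>C'. (\<forall>r\<in>R'. M r c' \<noteq> None) \<longrightarrow> c' = c)"

end

theory Submission
  imports Defs Complex_Main "HOL-Library.Function_Algebras" "HOL-Library.FuncSet"
begin

text \<open>Write support j for the rows with an entry from Z_q in column j and block j v for the
  rows with entry v. If the subcubes of a set T of rows form a union closed under changing the
  coordinates in a set L of columns, a Fourier argument shows that the constant function and
  the indicator differences [M r i = v] - [M r i = 0] (i \<in> L, 0 < v < q) are linearly
  independent on T, so (q - 1) |L| + 1 \<le> |T|. Non-expandability gives the opposite bound:
  the bang at (c, a) shows that block c a has at most one more row than there are columns whose
  support lies in support c but avoids block c a. Counting the columns below c in both ways
  forces all blocks of c to have the same size (q - 1) l + 1 with exactly l columns inside each,
  and the columns inside support c to be c together with those inside its blocks. By induction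
  on |support c|, using that the supports obtained this way are laminar, every block of c is a
  single row or again the support of a column with the same structure; this is the recursive
  description of M_{q,k}.\<close>

lemma sum_fun_apply: "(sum f A) x = (\<Sum>a\<in>A. f a x)"
  for f :: "'a \<Rightarrow> 'b \<Rightarrow> 'c::comm_monoid_add"
  by (induction A rule: infinite_finite_induct) auto

interpretation real_fun: vector_space "\<lambda>(a::real) (f::'r \<Rightarrow> real) x. a * f x"
  by unfold_locales (auto simp: fun_eq_iff algebra_simps)

lemma card_le_card_if_independent_on:
  fixes \<phi> :: "'k \<Rightarrow> 'r \<Rightarrow> real"
  assumes fin: "finite T" "finite K"
    and indep: "\<And>\<mu>. \<forall>r\<in>T. (\<Sum>k\<in>K. \<mu> k * \<phi> k r) = 0 \<Longrightarrow> \<forall>k\<in>K. \<mu> k = 0"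
  shows "card K \<le> card T"
proof -
  define \<psi> where "\<psi> k r = (if r \<in> T then \<phi> k r else 0)" for k r
  have indep_\<psi>: "\<forall>k\<in>K. \<mu> k = 0" if "\<forall>r\<in>T. (\<Sum>k\<in>K. \<mu> k * \<psi> k r) = 0" for \<mu>
    using indep that by (simp add: \<psi>_def)
  have inj: "inj_on \<psi> K"
  proof (rule inj_onI, rule ccontr)
    fix k1 k2 assume k: "k1 \<in> K" "k2 \<in> K" "\<psi> k1 = \<psi> k2" "k1 \<noteq> k2"
    define \<mu> where "\<mu> k = (if k = k1 then 1 else if k = k2 then -1 else (0::real))" for k
    have "(\<Sum>k\<in>K. \<mu> k * \<psi> k r) = (\<Sum>k\<in>{k1, k2}. \<mu> k * \<psi> k r)" for r
      by (rule sum.mono_neutral_right) (use fin k in \<open>auto simp: \<mu>_def\<close>)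
    then have "\<forall>r\<in>T. (\<Sum>k\<in>K. \<mu> k * \<psi> k r) = 0"
      using k by (simp add: \<mu>_def)
    then show False
      using indep_\<psi> k by (force simp: \<mu>_def)
  qed
  let ?B = "(\<lambda>r x. if x = r then 1 else (0::real)) ` T"
  have "real_fun.independent (\<psi> ` K)"
  proof (rule real_fun.independent_if_scalars_zero)
    fix f :: "('r \<Rightarrow> real) \<Rightarrow> real" and v
    assume sum0: "(\<Sum>w\<in>\<psi> ` K. (\<lambda>y. f w * w y)) = 0" and v: "v \<in> \<psi> ` K"
    have "\<forall>k\<in>K. (f \<circ> \<psi>) k = 0"
    proof (rule indep_\<psi>, intro ballI)
      fix r
      have "(\<Sum>w\<in>\<psi> ` K. f w * w r) = 0"
        using fun_cong[OF sum0, of r] by (simp add: sum_fun_apply)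
      then show "(\<Sum>k\<in>K. (f \<circ> \<psi>) k * \<psi> k r) = 0"
        using sum.reindex[OF inj, of "\<lambda>w. f w * w r"] by simp
    qed
    then show "f v = 0" using v by auto
  qed (use fin in simp)
  moreover have "\<psi> ` K \<subseteq> real_fun.span ?B"
  proof
    fix w assume "w \<in> \<psi> ` K"
    then obtain k where w: "w = \<psi> k" by auto
    have "w = (\<Sum>r\<in>T. (\<lambda>x. \<psi> k r * (if x = r then 1 else 0)))"
      using fin by (auto simp: w fun_eq_iff sum_fun_apply if_distrib \<psi>_def cong: if_cong)
    also have "\<dots> \<in> real_fun.span ?B"
      by (intro real_fun.span_sum real_fun.span_scale real_fun.span_base) auto
    finally show "w \<in> real_fun.span ?B" .
  qed
  ultimately have "card (\<psi> ` K) \<le> card ?B"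
    using real_fun.independent_span_bound fin by blast
  also have "\<dots> \<le> card T"
    using fin card_image_le by blast
  finally show ?thesis
    using card_image[OF inj] by simp
qed

lemma sum_differences_eq:
  fixes \<mu> f :: "nat \<Rightarrow> real"
  assumes "0 < q"
  shows "(\<Sum>v\<in>{1..<q}. \<mu> v * (f v - f 0))
    = (\<Sum>v<q. (if v = 0 then - (\<Sum>w\<in>{1..<q}. \<mu> w) else \<mu> v) * f v)"
proof -
  have "(\<Sum>v\<in>{1..<q}. \<mu> v * (f v - f 0))
      = - (\<Sum>w\<in>{1..<q}. \<mu> w) * f 0 + (\<Sum>v\<in>{1..<q}. \<mu> v * f v)"
    by (simp add: right_diff_distrib sum_subtractf sum_distrib_right)
  also have "(\<Sum>v\<in>{1..<q}. \<mu> v * f v)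
      = (\<Sum>v\<in>{1..<q}. (if v = 0 then - (\<Sum>w\<in>{1..<q}. \<mu> w) else \<mu> v) * f v)"
    by (rule sum.cong) auto
  also have "- (\<Sum>w\<in>{1..<q}. \<mu> w) * f 0 + \<dots>
      = (\<Sum>v\<in>insert 0 {1..<q}. (if v = 0 then - (\<Sum>w\<in>{1..<q}. \<mu> w) else \<mu> v) * f v)"
    by simp
  also have "insert 0 {1..<q} = {..<q}"
    using assms by auto
  finally show ?thesis .
qed

lemma eq_if_le_and_sum_le:
  fixes f g :: "'a \<Rightarrow> 'b::ordered_cancel_comm_monoid_add"
  assumes "finite A" "\<And>x. x \<in> A \<Longrightarrow> f x \<le> g x" "sum g A \<le> sum f A" "x \<in> A"
  shows "f x = g x"
proof (rule ccontr)
  assume "f x \<noteq> g x"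
  then have "sum f A < sum g A"
    using assms by (intro sum_strict_mono_ex1) (auto simp: order.strict_iff_order)
  then show False
    using assms(3) by simp
qed

section \<open>Sums over sets of points closed under coordinate updates\<close>

definition closed_under_updates :: "nat \<Rightarrow> 'c set \<Rightarrow> ('c \<Rightarrow> nat) set \<Rightarrow> bool" where
  "closed_under_updates q L X \<longleftrightarrow> (\<forall>x\<in>X. \<forall>i\<in>L. \<forall>u<q. x(i := u) \<in> X)"

lemma closed_under_updates_mono:
  "closed_under_updates q L X \<Longrightarrow> L' \<subseteq> L \<Longrightarrow> closed_under_updates q L' X"
  unfolding closed_under_updates_def by blast

text \<open>The fibres of X over the values of coordinate i are translates of each other.\<close>
lemma sum_closed_under_update_factor:
  fixes F :: "('c \<Rightarrow> nat) \<Rightarrow> real" and \<phi> :: "nat \<Rightarrow> real"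
  assumes fin: "finite X" and closed: "closed_under_updates q {i} X" and less: "\<forall>x\<in>X. x i < q"
    and inv: "\<And>x u. x \<in> X \<Longrightarrow> u < q \<Longrightarrow> F (x(i := u)) = F x"
  shows "real q * (\<Sum>x\<in>X. F x * \<phi> (x i)) = (\<Sum>x\<in>X. F x) * (\<Sum>u<q. \<phi> u)"
proof -
  define A where "A u = (\<Sum>x\<in>{x\<in>X. x i = u}. F x)" for u
  have A_const: "A u = A 0" if u: "u < q" for u
  proof -
    have "bij_betw (\<lambda>x. x(i := u)) {x\<in>X. x i = 0} {x\<in>X. x i = u}"
      by (rule bij_betw_byWitness[where f' = "\<lambda>x. x(i := 0)"])
        (use closed u in \<open>auto simp: closed_under_updates_def\<close>)
    then have "A u = (\<Sum>x\<in>{x\<in>X. x i = 0}. F (x(i := u)))"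
      unfolding A_def by (rule sum.reindex_bij_betw[symmetric])
    also have "\<dots> = A 0"
      unfolding A_def using inv u by (intro sum.cong) auto
    finally show ?thesis .
  qed
  have image: "(\<lambda>x. x i) ` X \<subseteq> {..<q}"
    using less by auto
  have "(\<Sum>x\<in>X. F x * \<phi> (x i)) = (\<Sum>u<q. \<Sum>x\<in>{x\<in>X. x i = u}. F x * \<phi> (x i))"
    by (rule sum.group[OF fin finite_lessThan image, symmetric])
  also have "\<dots> = (\<Sum>u<q. \<phi> u * A u)"
    unfolding A_def by (intro sum.cong refl) (auto simp: sum_distrib_left intro!: sum.cong)
  also have "\<dots> = (\<Sum>u<q. \<phi> u * A 0)"
    by (intro sum.cong refl) (metis A_const lessThan_iff)
  finally have lhs: "(\<Sum>x\<in>X. F x * \<phi> (x i)) = (\<Sum>u<q. \<phi> u) * A 0"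
    by (simp add: sum_distrib_right)
  have "(\<Sum>x\<in>X. F x) = (\<Sum>u<q. A u)"
    unfolding A_def by (rule sum.group[OF fin finite_lessThan image, symmetric])
  also have "\<dots> = (\<Sum>u<q. A 0)"
    by (intro sum.cong refl) (metis A_const lessThan_iff)
  finally show ?thesis
    using lhs by (simp add: ac_simps)
qed

lemma sum_closed_under_update_zero_mean:
  fixes g :: "nat \<Rightarrow> real"
  assumes "finite X" "closed_under_updates q {i} X" "\<forall>x\<in>X. x i < q" "0 < q"
    and "(\<Sum>u<q. g u) = 0"
  shows "(\<Sum>x\<in>X. g (x i)) = 0"
  using sum_closed_under_update_factor[OF assms(1-3), of "\<lambda>_. 1" g] assms(4,5) by simp

lemma sum_closed_under_updates_correlation:
  fixes g :: "'c \<Rightarrow> nat \<Rightarrow> real" and c0 :: real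
  assumes fin: "finite X" "finite L" and closed: "closed_under_updates q L X"
    and less: "\<forall>x\<in>X. \<forall>i\<in>L. x i < q"
    and zero_mean: "\<And>i. i \<in> L \<Longrightarrow> (\<Sum>u<q. g i u) = 0" and i0: "i0 \<in> L"
  shows "real q * (\<Sum>x\<in>X. (c0 + (\<Sum>i\<in>L. g i (x i))) * g i0 (x i0))
    = real (card X) * (\<Sum>u<q. (g i0 u)\<^sup>2)"
proof -
  have closed_i0: "closed_under_updates q {i0} X"
    using closed_under_updates_mono[OF closed] i0 by simp
  have less_i0: "\<forall>x\<in>X. x i0 < q"
    using less i0 by blast
  have const: "real q * (\<Sum>x\<in>X. c0 * g i0 (x i0)) = 0"
    using sum_closed_under_update_factor[OF fin(1) closed_i0 less_i0, of "\<lambda>_. c0" "g i0"]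
      zero_mean[OF i0] by simp
  have pair: "real q * (\<Sum>x\<in>X. g i (x i) * g i0 (x i0))
      = (if i = i0 then real (card X) * (\<Sum>u<q. (g i0 u)\<^sup>2) else 0)" if i: "i \<in> L" for i
  proof (cases "i = i0")
    case True
    then show ?thesis
      using sum_closed_under_update_factor[OF fin(1) closed_i0 less_i0, of "\<lambda>_. 1" "\<lambda>u. (g i0 u)\<^sup>2"]
      by (simp add: power2_eq_square)
  next
    case False
    then show ?thesis
      using sum_closed_under_update_factor[OF fin(1) closed_i0 less_i0, of "\<lambda>x. g i (x i)" "g i0"]
        zero_mean[OF i0] by simp
  qed
  have "real q * (\<Sum>x\<in>X. (c0 + (\<Sum>i\<in>L. g i (x i))) * g i0 (x i0))
      = real q * (\<Sum>x\<in>X. c0 * g i0 (x i0))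
        + (\<Sum>i\<in>L. real q * (\<Sum>x\<in>X. g i (x i) * g i0 (x i0)))"
    by (simp add: algebra_simps sum.distrib sum_distrib_left sum_distrib_right sum.swap[of _ X L])
  also have "\<dots> = real (card X) * (\<Sum>u<q. (g i0 u)\<^sup>2)"
    using const pair i0 fin(2) by (simp add: sum.delta cong: sum.cong)
  finally show ?thesis .
qed

section \<open>Fractal matrices\<close>

lemma bij_betw_UN_blocks:
  fixes A :: "nat \<Rightarrow> 'a set" and f :: "nat \<Rightarrow> 'a \<Rightarrow> nat"
  assumes index: "\<And>v x. v < q \<Longrightarrow> x \<in> A v \<Longrightarrow> b x = v"
    and bij: "\<And>v. v < q \<Longrightarrow> bij_betw (f v) (A v) {..<Q}"
  shows "bij_betw (\<lambda>x. b x * Q + f (b x) x) (\<Union>v<q. A v) {..<q * Q}"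
  unfolding bij_betw_def
proof
  have less: "f v x < Q" if "v < q" "x \<in> A v" for v x
    using bij[OF that(1)] that(2) by (auto simp: bij_betw_def)
  show "inj_on (\<lambda>x. b x * Q + f (b x) x) (\<Union>v<q. A v)"
  proof (rule inj_onI)
    fix x y assume x: "x \<in> (\<Union>v<q. A v)" and y: "y \<in> (\<Union>v<q. A v)"
      and eq: "b x * Q + f (b x) x = b y * Q + f (b y) y"
    obtain v w where v: "v < q" "x \<in> A v" and w: "w < q" "y \<in> A w"
      using x y by blast
    have "(b x * Q + f (b x) x) div Q = v" "(b x * Q + f (b x) x) mod Q = f v x"
      "(b y * Q + f (b y) y) div Q = w" "(b y * Q + f (b y) y) mod Q = f w y"
      using less[OF v] less[OF w] index[OF v] index[OF w] by auto
    then have "v = w" "f v x = f v y"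
      using eq by metis+
    then show "x = y"
      using bij[OF v(1)] v(2) w(2) by (auto simp: bij_betw_def dest: inj_onD)
  qed
  show "(\<lambda>x. b x * Q + f (b x) x) ` (\<Union>v<q. A v) = {..<q * Q}"
  proof
    show "(\<lambda>x. b x * Q + f (b x) x) ` (\<Union>v<q. A v) \<subseteq> {..<q * Q}"
    proof
      fix y assume "y \<in> (\<lambda>x. b x * Q + f (b x) x) ` (\<Union>v<q. A v)"
      then obtain v x where v: "v < q" "x \<in> A v" and y: "y = b x * Q + f (b x) x"
        by blast
      have "y < v * Q + Q"
        using less[OF v] index[OF v] y by simp
      also have "\<dots> \<le> q * Q"
        using mult_le_mono1[OF Suc_leI[OF v(1)], of Q] by simp
      finally show "y \<in> {..<q * Q}"
        by simp
    qed
    show "{..<q * Q} \<subseteq> (\<lambda>x. b x * Q + f (b x) x) ` (\<Union>v<q. A v)"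
    proof
      fix y assume "y \<in> {..<q * Q}"
      then have "0 < Q"
        by (cases "Q = 0") auto
      then have v: "y div Q < q" and "y mod Q \<in> {..<Q}"
        using \<open>y \<in> {..<q * Q}\<close> by (auto simp: less_mult_imp_div_less)
      then obtain x where x: "x \<in> A (y div Q)" "f (y div Q) x = y mod Q"
        using bij[OF v] by (metis bij_betw_def imageE)
      then have "y = b x * Q + f (b x) x"
        using index[OF v x(1)] by simp
      then show "y \<in> (\<lambda>x. b x * Q + f (b x) x) ` (\<Union>v<q. A v)"
        using v x(1) by blast
    qed
  qed
qed

lemma bij_betw_insert_zero:
  assumes bij: "bij_betw g B {..<n}" and c: "c \<notin> B"
  shows "bij_betw (\<lambda>j. if j = c then 0 else Suc (g j)) (insert c B) {..<Suc n}"
proof -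
  let ?h = "\<lambda>j. if j = c then 0 else Suc (g j)"
  have "bij_betw ?h B (Suc ` {..<n})"
    using bij c unfolding bij_betw_def inj_on_def by (auto simp: image_iff)
  then have "bij_betw ?h (B \<union> {c}) (Suc ` {..<n} \<union> {?h c})"
    using c by (intro notIn_Un_bij_betw) auto
  moreover have "Suc ` {..<n} \<union> {0} = {..<Suc n}"
    by (auto simp: image_iff less_Suc_eq_0_disj)
  ultimately show ?thesis
    by simp
qed

lemma fractal_width_eq:
  assumes "1 \<le> q"
  shows "(q - 1) * fractal_width q k + 1 = q ^ k"
proof (induction k)
  case (Suc k)
  obtain p where q: "q = Suc p"
    using assms by (cases q) auto
  have "(q - 1) * fractal_width q (Suc k) + 1 = q * ((q - 1) * fractal_width q k + 1)"
    unfolding q by (simp add: algebra_simps)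
  also have "\<dots> = q ^ Suc k"
    using Suc by simp
  finally show ?case .
qed simp

definition fractal_of_depth :: "nat \<Rightarrow> nat \<Rightarrow> ('r \<Rightarrow> 'c \<Rightarrow> nat option) \<Rightarrow> 'r set \<Rightarrow> 'c set \<Rightarrow> bool" where
  "fractal_of_depth q k M R' C' \<longleftrightarrow> (\<exists>\<rho> \<gamma>. bij_betw \<rho> R' {..<q ^ k} \<and>
     bij_betw \<gamma> C' {..<fractal_width q k} \<and> (\<forall>r\<in>R'. \<forall>j\<in>C'. M r j = fractal q k (\<rho> r) (\<gamma> j)))"

lemma is_fractal_iff: "is_fractal q M R' C' \<longleftrightarrow> (\<exists>k\<ge>1. fractal_of_depth q k M R' C')"
  unfolding is_fractal_def fractal_of_depth_def by blast

lemma fractal_of_depth_card: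
  assumes "fractal_of_depth q k M R' C'"
  shows "card R' = q ^ k" "card C' = fractal_width q k"
  using assms bij_betw_same_card unfolding fractal_of_depth_def by fastforce+

lemma fractal_of_depth_0: "fractal_of_depth q 0 M {r} {}"
  unfolding fractal_of_depth_def by (rule exI[of _ "\<lambda>_. 0"]) (auto simp: bij_betw_def)

lemma fractal_of_depth_Suc:
  fixes Rb :: "nat \<Rightarrow> 'r set" and Cb :: "nat \<Rightarrow> 'c set"
  assumes lead: "\<And>v r. v < q \<Longrightarrow> r \<in> Rb v \<Longrightarrow> M r c = Some v"
    and off_diagonal: "\<And>v w r j. v < q \<Longrightarrow> w < q \<Longrightarrow> v \<noteq> w \<Longrightarrow> r \<in> Rb v \<Longrightarrow> j \<in> Cb w \<Longrightarrow> M r j = None"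
    and disjoint: "\<And>v w. v < q \<Longrightarrow> w < q \<Longrightarrow> v \<noteq> w \<Longrightarrow> Cb v \<inter> Cb w = {}"
    and lead_new: "\<And>v. v < q \<Longrightarrow> c \<notin> Cb v"
    and blocks: "\<And>v. v < q \<Longrightarrow> fractal_of_depth q k M (Rb v) (Cb v)"
  shows "fractal_of_depth q (Suc k) M (\<Union>v<q. Rb v) (insert c (\<Union>v<q. Cb v))"
proof -
  define Q where "Q = q ^ k"
  define W where "W = fractal_width q k"
  have "\<forall>v. \<exists>\<rho> \<gamma>. v < q \<longrightarrow> bij_betw \<rho> (Rb v) {..<Q} \<and> bij_betw \<gamma> (Cb v) {..<W} \<and>
      (\<forall>r\<in>Rb v. \<forall>j\<in>Cb v. M r j = fractal q k (\<rho> r) (\<gamma> j))"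
    using blocks unfolding fractal_of_depth_def Q_def W_def by blast
  from choice[OF this] obtain \<rho>b where "\<forall>v. \<exists>\<gamma>. v < q \<longrightarrow> bij_betw (\<rho>b v) (Rb v) {..<Q} \<and>
      bij_betw \<gamma> (Cb v) {..<W} \<and> (\<forall>r\<in>Rb v. \<forall>j\<in>Cb v. M r j = fractal q k (\<rho>b v r) (\<gamma> j))"
    by blast
  from choice[OF this] obtain \<gamma>b where "\<forall>v. v < q \<longrightarrow> bij_betw (\<rho>b v) (Rb v) {..<Q} \<and>
      bij_betw (\<gamma>b v) (Cb v) {..<W} \<and> (\<forall>r\<in>Rb v. \<forall>j\<in>Cb v. M r j = fractal q k (\<rho>b v r) (\<gamma>b v j))"
    by blast
  then have block: "\<And>v. v < q \<Longrightarrow> bij_betw (\<rho>b v) (Rb v) {..<Q}"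
    "\<And>v. v < q \<Longrightarrow> bij_betw (\<gamma>b v) (Cb v) {..<W}"
    "\<And>v r j. v < q \<Longrightarrow> r \<in> Rb v \<Longrightarrow> j \<in> Cb v \<Longrightarrow> M r j = fractal q k (\<rho>b v r) (\<gamma>b v j)"
    by blast+
  define row_block where "row_block r = the (M r c)" for r
  define col_block where "col_block j = (SOME v. v < q \<and> j \<in> Cb v)" for j
  define \<rho> where "\<rho> r = row_block r * Q + \<rho>b (row_block r) r" for r
  define \<gamma>' where "\<gamma>' j = col_block j * W + \<gamma>b (col_block j) j" for j
  define \<gamma> where "\<gamma> j = (if j = c then 0 else Suc (\<gamma>' j))" for j
  have row_block: "row_block r = v" if "v < q" "r \<in> Rb v" for v r
    using lead[OF that] by (simp add: row_block_def)
  have col_block: "col_block j = w" if w: "w < q" "j \<in> Cb w" for w j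
  proof -
    have some: "col_block j < q" "j \<in> Cb (col_block j)"
      unfolding col_block_def using someI_ex[of "\<lambda>v. v < q \<and> j \<in> Cb v"] w by blast+
    show ?thesis
    proof (rule ccontr)
      assume "col_block j \<noteq> w"
      then have "Cb (col_block j) \<inter> Cb w = {}"
        using disjoint some(1) w(1) by blast
      then show False
        using some(2) w(2) by blast
    qed
  qed
  have bij_\<rho>: "bij_betw \<rho> (\<Union>v<q. Rb v) {..<q ^ Suc k}"
    using bij_betw_UN_blocks[of q Rb row_block \<rho>b Q] row_block block(1)
    unfolding \<rho>_def Q_def by (simp add: mult.commute)
  have "bij_betw \<gamma>' (\<Union>v<q. Cb v) {..<q * W}"
    using bij_betw_UN_blocks[of q Cb col_block \<gamma>b W] col_block block(2) unfolding \<gamma>'_def by simp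
  moreover have "c \<notin> (\<Union>v<q. Cb v)"
    using lead_new by blast
  ultimately have "bij_betw \<gamma> (insert c (\<Union>v<q. Cb v)) {..<Suc (q * W)}"
    unfolding \<gamma>_def by (rule bij_betw_insert_zero)
  then have bij_\<gamma>: "bij_betw \<gamma> (insert c (\<Union>v<q. Cb v)) {..<fractal_width q (Suc k)}"
    by (simp add: W_def)
  have entries: "M r j = fractal q (Suc k) (\<rho> r) (\<gamma> j)"
    if r: "v < q" "r \<in> Rb v" and j: "j \<in> insert c (\<Union>v<q. Cb v)" for v r j
  proof -
    have "\<rho>b v r < Q"
      using block(1)[OF r(1)] r(2) by (auto simp: bij_betw_def)
    then have \<rho>_div: "\<rho> r div Q = v" "\<rho> r mod Q = \<rho>b v r"
      using row_block[OF r] by (simp_all add: \<rho>_def)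
    show ?thesis
    proof (cases "j = c")
      case True
      then show ?thesis
        using lead[OF r] \<rho>_div by (simp add: \<gamma>_def Q_def)
    next
      case False
      then obtain w where w: "w < q" "j \<in> Cb w"
        using j by blast
      have "\<gamma>b w j < W"
        using block(2)[OF w(1)] w(2) by (auto simp: bij_betw_def)
      then have \<gamma>_div: "(\<gamma> j - 1) div W = w" "(\<gamma> j - 1) mod W = \<gamma>b w j"
        using col_block[OF w] False by (simp_all add: \<gamma>_def \<gamma>'_def)
      have unfold: "fractal q (Suc k) (\<rho> r) (\<gamma> j)
          = (if w = v then fractal q k (\<rho>b v r) (\<gamma>b w j) else None)"
        using \<rho>_div \<gamma>_div False by (simp add: Let_def \<gamma>_def Q_def W_def)
      show ?thesis
        unfolding unfold using block(3)[OF r] off_diagonal[OF r(1) w(1) _ r(2) w(2)] w(2) by auto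
    qed
  qed
  show ?thesis
    unfolding fractal_of_depth_def using bij_\<rho> bij_\<gamma> entries by blast
qed

section \<open>Partitions of the cube into subcubes\<close>

locale primitive_partition =
  fixes q :: nat and R :: "'r set" and C :: "'c set" and M :: "'r \<Rightarrow> 'c \<Rightarrow> nat option"
  assumes q_ge_2: "2 \<le> q" and partition: "star_partition q R C M"
    and primitive: "A_primitive R C M"
begin

definition points :: "('c \<Rightarrow> nat) set" where
  "points = PiE C (\<lambda>_. {..<q})"

definition cell :: "'r \<Rightarrow> ('c \<Rightarrow> nat) set" where
  "cell r = {x \<in> points. in_subcube C M r x}"

definition support :: "'c \<Rightarrow> 'r set" where
  "support j = {r \<in> R. M r j \<noteq> None}"

definition block :: "'c \<Rightarrow> nat \<Rightarrow> 'r set" where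
  "block j v = {r \<in> R. M r j = Some v}"

text \<open>The columns that a transfractal with row set T may use.\<close>
definition cols_within :: "'r set \<Rightarrow> 'c set" where
  "cols_within T = {j \<in> C. support j \<subseteq> T}"

lemma finite_R: "finite R" and finite_C: "finite C"
  using partition by (auto simp: star_partition_def)

lemma entry_less: "r \<in> R \<Longrightarrow> j \<in> C \<Longrightarrow> M r j = Some a \<Longrightarrow> a < q"
  using partition by (auto simp: star_partition_def star_entries_ok_def)

lemma finite_points: "finite points"
  unfolding points_def using finite_C by (simp add: finite_PiE)

lemma points_less: "x \<in> points \<Longrightarrow> j \<in> C \<Longrightarrow> x j < q"
  unfolding points_def by auto

lemma points_update: "x \<in> points \<Longrightarrow> j \<in> C \<Longrightarrow> u < q \<Longrightarrow> x(j := u) \<in> points"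
  unfolding points_def by (auto simp: PiE_def extensional_def)

lemma point_in_subcube: "x \<in> points \<Longrightarrow> \<exists>r\<in>R. in_subcube C M r x"
  using partition points_less unfolding star_partition_def by metis

lemma point_in_subcube_unique:
  "x \<in> points \<Longrightarrow> r \<in> R \<Longrightarrow> r' \<in> R \<Longrightarrow> in_subcube C M r x \<Longrightarrow> in_subcube C M r' x \<Longrightarrow> r = r'"
  using partition points_less unfolding star_partition_def by metis

lemma in_subcube_update_star:
  "M r j = None \<Longrightarrow> in_subcube C M r (x(j := u)) \<longleftrightarrow> in_subcube C M r x"
  unfolding in_subcube_def by auto

lemma in_subcube_entry: "in_subcube C M r x \<Longrightarrow> j \<in> C \<Longrightarrow> M r j = Some a \<Longrightarrow> x j = a"
  unfolding in_subcube_def by force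

lemma subcube_has_point:
  assumes r: "r \<in> R"
  shows "\<exists>x\<in>points. in_subcube C M r x"
proof
  define x where "x = restrict (\<lambda>j. case M r j of Some a \<Rightarrow> a | None \<Rightarrow> 0) C"
  show "x \<in> points"
    unfolding points_def x_def using entry_less[OF r] q_ge_2 by (auto split: option.splits)
  show "in_subcube C M r x"
    unfolding in_subcube_def x_def by (auto split: option.splits)
qed

text \<open>A subcube containing x(j := v) with * in column j would also contain x, so it would be
  the subcube of r, which fixes column j.\<close>
lemma update_in_block:
  assumes x: "x \<in> points" "r \<in> R" "in_subcube C M r x" and j: "j \<in> C" "M r j \<noteq> None"
    and v: "v < q"
  obtains \<sigma> where "\<sigma> \<in> block j v" "in_subcube C M \<sigma> (x(j := v))"
proof -
  obtain \<sigma> where \<sigma>: "\<sigma> \<in> R" "in_subcube C M \<sigma> (x(j := v))"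
    using point_in_subcube[OF points_update[OF x(1) j(1) v]] by blast
  have "M \<sigma> j = Some v"
  proof (cases "M \<sigma> j")
    case None
    then have "in_subcube C M \<sigma> x"
      using \<sigma>(2) in_subcube_update_star by metis
    then have "\<sigma> = r"
      using \<sigma>(1) x point_in_subcube_unique by blast
    then show ?thesis
      using None j(2) by simp
  next
    case (Some a)
    then show ?thesis
      using in_subcube_entry[OF \<sigma>(2) j(1) Some] by simp
  qed
  then show thesis
    using that \<sigma> by (simp add: block_def)
qed

lemma cell_subset_points: "cell r \<subseteq> points"
  unfolding cell_def by auto

lemma cell_less: "x \<in> cell r \<Longrightarrow> j \<in> C \<Longrightarrow> x j < q"
  unfolding cell_def using points_less by blast

lemma finite_cell: "finite (cell r)"
  using finite_subset[OF cell_subset_points finite_points] .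

lemma cell_nonempty: "r \<in> R \<Longrightarrow> cell r \<noteq> {}"
  using subcube_has_point unfolding cell_def by auto

lemma cells_disjoint: "r \<in> R \<Longrightarrow> r' \<in> R \<Longrightarrow> r \<noteq> r' \<Longrightarrow> cell r \<inter> cell r' = {}"
  unfolding cell_def using point_in_subcube_unique by blast

lemma cell_closed_under_star_updates: "closed_under_updates q {i \<in> C. M r i = None} (cell r)"
  unfolding closed_under_updates_def cell_def using points_update in_subcube_update_star by auto

lemma block_nonempty:
  assumes j: "j \<in> C" and v: "v < q"
  shows "block j v \<noteq> {}"
proof -
  obtain r where r: "r \<in> R" "M r j \<noteq> None"
    using primitive j unfolding A_primitive_def by blast
  obtain x where x: "x \<in> points" "in_subcube C M r x"
    using subcube_has_point[OF r(1)] by blast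
  show ?thesis
    using update_in_block[OF x(1) r(1) x(2) j r(2) v] by blast
qed

lemma support_eq_UN_block: "j \<in> C \<Longrightarrow> support j = (\<Union>v<q. block j v)"
  unfolding support_def block_def using entry_less by fastforce

lemma block_subset_support: "block j v \<subseteq> support j"
  unfolding block_def support_def by auto

lemma block_disjoint: "v \<noteq> w \<Longrightarrow> block j v \<inter> block j w = {}"
  unfolding block_def by auto

lemma finite_support: "finite (support j)"
  unfolding support_def using finite_R by simp

lemma finite_block: "finite (block j v)"
  unfolding block_def using finite_R by simp

lemma finite_cols_within: "finite (cols_within T)"
  unfolding cols_within_def using finite_C by simp

lemma card_support: "j \<in> C \<Longrightarrow> card (support j) = (\<Sum>v<q. card (block j v))"
  unfolding support_eq_UN_block by (rule card_UN_disjoint) (auto simp: finite_block block_disjoint)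

lemma sum_entry_indicator:
  fixes f :: "nat \<Rightarrow> real"
  assumes "r \<in> R" "i \<in> C"
  shows "(\<Sum>v<q. f v * (if M r i = Some v then 1 else 0)) = (case M r i of None \<Rightarrow> 0 | Some u \<Rightarrow> f u)"
proof (cases "M r i")
  case (Some a)
  then have "a < q"
    using entry_less assms by blast
  have "(\<Sum>v<q. f v * (if M r i = Some v then 1 else 0)) = (\<Sum>v<q. if v = a then f v else 0)"
    by (rule sum.cong) (simp_all add: Some)
  then show ?thesis
    using \<open>a < q\<close> Some by simp
qed simp

lemma other_value: "\<exists>w<q. w \<noteq> v"
  using q_ge_2 by (intro exI[of _ "if v = 0 then 1 else 0"]) auto

lemma support_not_subset_block: "j \<in> C \<Longrightarrow> \<not> support j \<subseteq> block j v"
proof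
  assume j: "j \<in> C" and "support j \<subseteq> block j v"
  moreover obtain w where "w < q" "w \<noteq> v"
    using other_value by blast
  ultimately show False
    using block_nonempty[of j w] block_subset_support[of j w] block_disjoint[of w v j] by blast
qed

lemma support_nonempty: "j \<in> C \<Longrightarrow> support j \<noteq> {}"
  using support_not_subset_block by blast

lemma col_notin_cols_within_block: "j \<notin> cols_within (block j v)"
  using support_not_subset_block unfolding cols_within_def by blast

lemma cols_within_block_disjoint:
  "v \<noteq> w \<Longrightarrow> cols_within (block j v) \<inter> cols_within (block j w) = {}"
  unfolding cols_within_def using support_nonempty block_disjoint by blast

lemma cols_within_card_le_1:
  assumes "finite T" "card T \<le> 1"
  shows "cols_within T = {}"
proof (rule ccontr)
  assume "cols_within T \<noteq> {}"
  then obtain j where j: "j \<in> C" "support j \<subseteq> T"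
    unfolding cols_within_def by blast
  obtain r where r: "r \<in> support j"
    using support_nonempty[OF j(1)] by blast
  have "\<forall>a\<in>T. \<forall>b\<in>T. a = b"
    using assms card_le_Suc0_iff_eq[of T] by simp
  then have "support j = {r}"
    using j(2) r by blast
  then have "support j \<subseteq> block j (the (M r j))"
    unfolding support_def block_def by force
  then show False
    using support_not_subset_block[OF j(1)] by blast
qed

section \<open>The rank bound\<close>

lemma cell_correlation:
  fixes g :: "'c \<Rightarrow> nat \<Rightarrow> real" and c0 :: real
  assumes r: "r \<in> R" and L: "L \<subseteq> C" and zero_mean: "\<And>i. (\<Sum>u<q. g i u) = 0"
    and row_zero: "c0 + (\<Sum>i\<in>L. case M r i of None \<Rightarrow> 0 | Some u \<Rightarrow> g i u) = 0"
    and i0: "i0 \<in> L"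
  shows "real q * (\<Sum>x\<in>cell r. (c0 + (\<Sum>i\<in>L. g i (x i))) * g i0 (x i0))
    = (if M r i0 = None then real (card (cell r)) * (\<Sum>u<q. (g i0 u)\<^sup>2) else 0)"
proof -
  define F where "F = {i \<in> L. M r i = None}"
  have fin_L: "finite L"
    using finite_subset[OF L finite_C] .
  have fin_F: "finite F"
    using fin_L by (simp add: F_def)
  have closed: "closed_under_updates q F (cell r)"
    by (rule closed_under_updates_mono[OF cell_closed_under_star_updates]) (use L in \<open>auto simp: F_def\<close>)
  have less: "\<forall>x\<in>cell r. \<forall>i\<in>F. x i < q"
    using cell_less L by (auto simp: F_def)
  have on_cell: "c0 + (\<Sum>i\<in>L. g i (x i)) = (\<Sum>i\<in>F. g i (x i))" if x: "x \<in> cell r" for x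
  proof -
    have "g i (x i) = (case M r i of None \<Rightarrow> 0 | Some u \<Rightarrow> g i u) + (if i \<in> F then g i (x i) else 0)"
      if "i \<in> L" for i
      using x that L in_subcube_entry[of r x i] by (auto simp: F_def cell_def split: option.split)
    then have "(\<Sum>i\<in>L. g i (x i))
        = (\<Sum>i\<in>L. (case M r i of None \<Rightarrow> 0 | Some u \<Rightarrow> g i u) + (if i \<in> F then g i (x i) else 0))"
      by (rule sum.cong[OF refl])
    also have "\<dots> = (\<Sum>i\<in>L. case M r i of None \<Rightarrow> 0 | Some u \<Rightarrow> g i u) + (\<Sum>i\<in>F. g i (x i))"
      using fin_L by (simp add: sum.distrib F_def sum.inter_filter)
    finally show ?thesis
      using row_zero by simp
  qed
  show ?thesis
  proof (cases "M r i0")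
    case None
    then have "i0 \<in> F"
      using i0 by (simp add: F_def)
    have "real q * (\<Sum>x\<in>cell r. (c0 + (\<Sum>i\<in>L. g i (x i))) * g i0 (x i0))
        = real q * (\<Sum>x\<in>cell r. (0 + (\<Sum>i\<in>F. g i (x i))) * g i0 (x i0))"
      using on_cell by simp
    also have "\<dots> = real (card (cell r)) * (\<Sum>u<q. (g i0 u)\<^sup>2)"
      by (rule sum_closed_under_updates_correlation[OF finite_cell fin_F closed less])
        (use zero_mean \<open>i0 \<in> F\<close> in auto)
    finally show ?thesis
      using None by simp
  next
    case (Some a)
    have "(\<Sum>x\<in>cell r. (c0 + (\<Sum>i\<in>L. g i (x i))) * g i0 (x i0))
        = (\<Sum>x\<in>cell r. (\<Sum>i\<in>F. g i (x i)) * g i0 a)"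
      using on_cell in_subcube_entry[OF _ _ Some] i0 L by (intro sum.cong) (auto simp: cell_def)
    also have "\<dots> = (\<Sum>i\<in>F. \<Sum>x\<in>cell r. g i (x i)) * g i0 a"
      by (simp add: sum_distrib_right sum.swap[of _ "cell r" F])
    also have "(\<Sum>i\<in>F. \<Sum>x\<in>cell r. g i (x i)) = 0"
    proof (rule sum.neutral, rule ballI)
      fix i assume "i \<in> F"
      then show "(\<Sum>x\<in>cell r. g i (x i)) = 0"
        using sum_closed_under_update_zero_mean[OF finite_cell _ _ _ zero_mean]
          closed_under_updates_mono[OF closed] less q_ge_2 by simp
    qed
    finally show ?thesis
      using Some by simp
  qed
qed

text \<open>Correlate the function x \<mapsto> c0 + \<Sum>i\<in>L. g i (x i) with g i0 once over the whole
  union of the subcubes of T and once subcube by subcube: the subcubes fixing coordinate i0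
  contribute nothing to the second sum, so they force the sum of squares of g i0 to vanish.\<close>
lemma zero_mean_coefficients_vanish:
  fixes g :: "'c \<Rightarrow> nat \<Rightarrow> real" and c0 :: real
  assumes T: "T \<subseteq> R" and L: "L \<subseteq> C"
    and closed: "closed_under_updates q L (\<Union>r\<in>T. cell r)"
    and zero_mean: "\<And>i. (\<Sum>u<q. g i u) = 0"
    and rows_zero: "\<And>r. r \<in> T \<Longrightarrow> c0 + (\<Sum>i\<in>L. case M r i of None \<Rightarrow> 0 | Some u \<Rightarrow> g i u) = 0"
    and i0: "i0 \<in> L" and r0: "r0 \<in> T" "M r0 i0 \<noteq> None"
  shows "\<forall>u<q. g i0 u = 0"
proof -
  define \<Gamma> where "\<Gamma> = (\<Sum>u<q. (g i0 u)\<^sup>2)"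
  define S where "S r = real q * (\<Sum>x\<in>cell r. (c0 + (\<Sum>i\<in>L. g i (x i))) * g i0 (x i0))" for r
  have fin_T: "finite T"
    using finite_subset[OF T finite_R] .
  have fin_L: "finite L"
    using finite_subset[OF L finite_C] .
  have S: "S r = (if M r i0 = None then real (card (cell r)) * \<Gamma> else 0)" if "r \<in> T" for r
    using cell_correlation[OF _ L zero_mean rows_zero i0] that T unfolding S_def \<Gamma>_def by blast
  have sum_cells: "(\<Sum>x\<in>(\<Union>r\<in>T. cell r). f x) = (\<Sum>r\<in>T. \<Sum>x\<in>cell r. f x)"
    for f :: "('c \<Rightarrow> nat) \<Rightarrow> real"
    by (rule sum.UNION_disjoint) (use fin_T finite_cell cells_disjoint T in auto)
  have "(\<Sum>r\<in>T. real (card (cell r))) * \<Gamma> = real (card (\<Union>r\<in>T. cell r)) * \<Gamma>"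
    using sum_cells[of "\<lambda>_. 1"] by simp
  also have "\<dots> = (\<Sum>r\<in>T. S r)"
    unfolding \<Gamma>_def S_def sum_distrib_left[symmetric] sum_cells[symmetric]
    by (rule sum_closed_under_updates_correlation[symmetric, OF _ fin_L closed])
      (use fin_T finite_cell cell_less L zero_mean i0 in auto)
  also have "\<dots> = (\<Sum>r\<in>T. if M r i0 = None then real (card (cell r)) * \<Gamma> else 0)"
    using S by simp
  finally have "(\<Sum>r\<in>T. real (card (cell r)) * \<Gamma>)
      = (\<Sum>r\<in>T. if M r i0 = None then real (card (cell r)) * \<Gamma> else 0)"
    by (simp add: sum_distrib_right)
  moreover have "(\<Sum>r\<in>T. real (card (cell r)) * \<Gamma>)
      = (\<Sum>r\<in>T. if M r i0 = None then real (card (cell r)) * \<Gamma> else 0)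
        + (\<Sum>r\<in>T. if M r i0 = None then 0 else real (card (cell r)) * \<Gamma>)"
    by (subst sum.distrib[symmetric]) (rule sum.cong; simp)
  ultimately have sum0: "(\<Sum>r\<in>T. if M r i0 = None then 0 else real (card (cell r)) * \<Gamma>) = 0"
    by simp
  have "\<Gamma> \<ge> 0"
    unfolding \<Gamma>_def by (simp add: sum_nonneg)
  then have "\<forall>r\<in>T. (if M r i0 = None then 0 else real (card (cell r)) * \<Gamma>) = 0"
    using sum0 sum_nonneg_eq_0_iff[OF fin_T, of "\<lambda>r. if M r i0 = None then 0 else real (card (cell r)) * \<Gamma>"]
    by simp
  then have "real (card (cell r0)) * \<Gamma> = 0"
    using r0 by (metis (full_types))
  moreover have "card (cell r0) > 0"
    using cell_nonempty r0 T finite_cell by (auto simp: card_gt_0_iff)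
  ultimately have "\<Gamma> = 0"
    by simp
  then show ?thesis
    unfolding \<Gamma>_def by (subst (asm) sum_nonneg_eq_0_iff) auto
qed

definition indicator_basis :: "('c \<times> nat) option \<Rightarrow> 'r \<Rightarrow> real" where
  "indicator_basis k r = (case k of None \<Rightarrow> 1
     | Some (i, v) \<Rightarrow> (if M r i = Some v then 1 else 0) - (if M r i = Some 0 then 1 else 0))"

text \<open>The coefficients of a vanishing combination, rewritten as values g i u of zero-mean
  functions, are killed by zero_mean_coefficients_vanish.\<close>
lemma indicator_basis_independent:
  fixes \<mu> :: "('c \<times> nat) option \<Rightarrow> real"
  assumes T: "T \<subseteq> R" "T \<noteq> {}" and L: "L \<subseteq> C"
    and closed: "closed_under_updates q L (\<Union>r\<in>T. cell r)"
    and used: "\<And>i. i \<in> L \<Longrightarrow> \<exists>r\<in>T. M r i \<noteq> None"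
    and combination: "\<forall>r\<in>T. (\<Sum>k\<in>insert None (Some ` (L \<times> {1..<q})). \<mu> k * indicator_basis k r) = 0"
  shows "\<forall>k\<in>insert None (Some ` (L \<times> {1..<q})). \<mu> k = 0"
proof -
  let ?K = "insert None (Some ` (L \<times> {1..<q}))"
  have fin_L: "finite L"
    using finite_subset[OF L finite_C] .
  define g where
    "g i u = (if u = 0 then - (\<Sum>v\<in>{1..<q}. \<mu> (Some (i, v))) else \<mu> (Some (i, u)))" for i u
  have zero_mean: "(\<Sum>u<q. g i u) = 0" for i
  proof -
    have "{..<q} = insert 0 {1..<q}"
      using q_ge_2 by auto
    then show ?thesis
      by (simp add: g_def)
  qed
  have expand: "(\<Sum>k\<in>?K. \<mu> k * indicator_basis k r)
      = \<mu> None + (\<Sum>i\<in>L. case M r i of None \<Rightarrow> 0 | Some u \<Rightarrow> g i u)" if r: "r \<in> T" for r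
  proof -
    have "(\<Sum>v\<in>{1..<q}. \<mu> (Some (i, v)) * indicator_basis (Some (i, v)) r)
        = (case M r i of None \<Rightarrow> 0 | Some u \<Rightarrow> g i u)" if "i \<in> L" for i
      using sum_differences_eq[of q "\<lambda>v. \<mu> (Some (i, v))" "\<lambda>v. if M r i = Some v then 1 else 0"]
        q_ge_2 sum_entry_indicator[of r i "g i"] r T(1) L that
      by (auto simp: indicator_basis_def g_def)
    moreover have "(\<Sum>k\<in>?K. \<mu> k * indicator_basis k r)
        = \<mu> None + (\<Sum>i\<in>L. \<Sum>v\<in>{1..<q}. \<mu> (Some (i, v)) * indicator_basis (Some (i, v)) r)"
      using fin_L by (simp add: sum.reindex indicator_basis_def image_iff sum.cartesian_product split_def)
    ultimately show ?thesis
      by simp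
  qed
  have g_zero: "\<forall>u<q. g i u = 0" if i: "i \<in> L" for i
  proof -
    obtain r0 where r0: "r0 \<in> T" "M r0 i \<noteq> None"
      using used[OF i] by blast
    show ?thesis
      by (rule zero_mean_coefficients_vanish[OF T(1) L closed zero_mean _ i r0, of "\<mu> None"])
        (use combination expand in simp)
  qed
  obtain r where r: "r \<in> T"
    using T(2) by blast
  have "(\<Sum>i\<in>L. case M r i of None \<Rightarrow> 0 | Some u \<Rightarrow> g i u) = 0"
    using g_zero entry_less[of r] r T(1) L by (intro sum.neutral) (force split: option.split)
  then have "\<mu> None = 0"
    using combination expand[OF r] r by simp
  moreover have "\<mu> (Some (i, v)) = 0" if "i \<in> L" "v \<in> {1..<q}" for i v
    using g_zero[OF that(1)] that(2) by (auto simp: g_def)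
  ultimately show ?thesis
    by auto
qed

lemma rank_bound:
  assumes T: "T \<subseteq> R" "T \<noteq> {}" and L: "L \<subseteq> C"
    and closed: "closed_under_updates q L (\<Union>r\<in>T. cell r)"
    and used: "\<And>i. i \<in> L \<Longrightarrow> \<exists>r\<in>T. M r i \<noteq> None"
  shows "(q - 1) * card L + 1 \<le> card T"
proof -
  have fin_L: "finite L"
    using finite_subset[OF L finite_C] .
  have "card (insert None (Some ` (L \<times> {1..<q}))) \<le> card T"
    by (rule card_le_card_if_independent_on[where \<phi> = indicator_basis])
      (use finite_subset[OF T(1) finite_R] fin_L indicator_basis_independent[OF T L closed used] in auto)
  then show ?thesis
    using fin_L by (simp add: card_image card_cartesian_product image_iff mult.commute)
qed

lemma card_cols_within_bound:
  assumes T: "T \<subseteq> R" "T \<noteq> {}"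
  shows "(q - 1) * card (cols_within T) + 1 \<le> card T"
proof (rule rank_bound[OF T])
  show "cols_within T \<subseteq> C"
    unfolding cols_within_def by auto
  show "\<exists>r\<in>T. M r i \<noteq> None" if "i \<in> cols_within T" for i
    using that support_nonempty unfolding cols_within_def support_def by blast
  show "closed_under_updates q (cols_within T) (\<Union>r\<in>T. cell r)"
    unfolding closed_under_updates_def
  proof (intro ballI allI impI)
    fix x i u assume x: "x \<in> (\<Union>r\<in>T. cell r)" and i: "i \<in> cols_within T" and u: "u < q"
    obtain r where r: "r \<in> T" "x \<in> cell r"
      using x by blast
    have x_points: "x(i := u) \<in> points"
      using r(2) i u points_update by (auto simp: cell_def cols_within_def)
    obtain \<sigma> where \<sigma>: "\<sigma> \<in> R" "in_subcube C M \<sigma> (x(i := u))"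
      using point_in_subcube[OF x_points] by blast
    have "\<sigma> \<in> T"
    proof (rule ccontr)
      assume "\<sigma> \<notin> T"
      then have "M \<sigma> i = None"
        using i \<sigma>(1) by (auto simp: cols_within_def support_def)
      then have "in_subcube C M \<sigma> x"
        using \<sigma>(2) in_subcube_update_star by metis
      then have "\<sigma> = r"
        using point_in_subcube_unique \<sigma>(1) r T(1) by (auto simp: cell_def)
      then show False
        using \<open>\<sigma> \<notin> T\<close> r(1) by simp
    qed
    then show "x(i := u) \<in> (\<Union>r\<in>T. cell r)"
      using \<sigma> x_points by (auto simp: cell_def)
  qed
qed

section \<open>Blocks of a column\<close>

text \<open>Start in a subcube of block j1 v, move coordinate j1 to v' (into a subcube with * in
  column j2), change coordinate j2 there to a value other than w, and move j1 back to v: the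
  point reached lies in a subcube of block j1 v whose entry in column j2 is not w.\<close>
lemma block_not_subset_block:
  assumes j: "j1 \<in> C" "j2 \<in> C" "j1 \<noteq> j2" and v: "v < q" "v' < q"
    and star: "\<forall>r\<in>block j1 v'. M r j2 = None" and nonempty: "block j1 v \<noteq> {}"
  shows "\<not> block j1 v \<subseteq> block j2 w"
proof
  assume sub: "block j1 v \<subseteq> block j2 w"
  obtain r where r: "r \<in> R" "M r j1 = Some v"
    using nonempty by (auto simp: block_def)
  obtain x where x: "x \<in> points" "in_subcube C M r x"
    using subcube_has_point[OF r(1)] by blast
  obtain \<rho> where \<rho>: "\<rho> \<in> block j1 v'" "in_subcube C M \<rho> (x(j1 := v'))"
    using update_in_block[OF x(1) r(1) x(2) j(1) _ v(2)] r(2) by blast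
  obtain w' where w': "w' < q" "w' \<noteq> w"
    using other_value by blast
  define y where "y = x(j1 := v', j2 := w')"
  have y: "y \<in> points" "in_subcube C M \<rho> y"
    using \<rho> star points_update x(1) j v w' in_subcube_update_star
    by (auto simp: y_def)
  obtain \<sigma> where \<sigma>: "\<sigma> \<in> block j1 v" "in_subcube C M \<sigma> (y(j1 := v))"
    using update_in_block[OF y(1) _ y(2) j(1) _ v(1)] \<rho>(1) by (auto simp: block_def)
  have "M \<sigma> j2 = Some w"
    using sub \<sigma>(1) by (auto simp: block_def)
  then have "(y(j1 := v)) j2 = w"
    using in_subcube_entry[OF \<sigma>(2) j(2)] by simp
  then show False
    using w' j(3) by (simp add: y_def)
qed

text \<open>A detour through block c a, where coordinate i is free, connects any point of a subcube
  in block c b to its update in coordinate i.\<close>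
lemma block_cells_closed_under_update:
  assumes c: "c \<in> C" and a: "a < q" and i: "i \<in> C" "support i \<inter> block c a = {}"
  shows "closed_under_updates q {i} (\<Union>r\<in>block c b. cell r)"
  unfolding closed_under_updates_def
proof (intro ballI allI impI)
  fix x i' u assume x: "x \<in> (\<Union>r\<in>block c b. cell r)" and i': "i' \<in> {i}" and u: "u < q"
  obtain r where r: "r \<in> R" "M r c = Some b" "x \<in> points" "in_subcube C M r x"
    using x by (auto simp: block_def cell_def)
  have "i \<noteq> c"
    using i(2) block_nonempty[OF c a] block_subset_support by blast
  obtain \<rho> where \<rho>: "\<rho> \<in> block c a" "in_subcube C M \<rho> (x(c := a))"
    using update_in_block[OF r(3) r(1) r(4) c _ a] r(2) by blast
  then have "M \<rho> i = None"
    using i(2) by (auto simp: block_def support_def)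
  then have y: "x(c := a, i := u) \<in> points" "in_subcube C M \<rho> (x(c := a, i := u))"
    using \<rho>(2) in_subcube_update_star points_update r(3) c a i(1) u by auto
  obtain \<sigma> where \<sigma>: "\<sigma> \<in> block c b" "in_subcube C M \<sigma> (x(c := a, i := u, c := b))"
    using update_in_block[OF y(1) _ y(2) c _ entry_less[OF r(1) c r(2)]] \<rho>(1)
    by (auto simp: block_def)
  have "x(c := a, i := u, c := b) = x(i := u)"
    using \<open>i \<noteq> c\<close> in_subcube_entry[OF r(4) c r(2)] by (auto simp: fun_eq_iff)
  then show "x(i' := u) \<in> (\<Union>r\<in>block c b. cell r)"
    using \<sigma> i' points_update[OF r(3) i(1) u] by (auto simp: cell_def)
qed

definition cols_avoiding :: "'c \<Rightarrow> nat \<Rightarrow> 'c set" where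
  "cols_avoiding c a = {j \<in> C - {c}. support j \<subseteq> support c - block c a}"

lemma bang_cols_eq:
  "bang_cols q R C M c a = Inl ` (C - {c} - cols_avoiding c a) \<union> Inr ` block c a"
proof -
  have rows: "(r, k) \<in> bang_rows q R M c a \<longleftrightarrow>
      r \<in> R \<and> (M r c = None \<and> k = 0 \<or> M r c = Some a \<and> k < q)" for r k
    unfolding bang_rows_def by auto
  have old_col: "(\<exists>rk\<in>bang_rows q R M c a. bang_ent M c a rk (Inl j) \<noteq> None)
      \<longleftrightarrow> (\<exists>r\<in>R. (M r c = None \<or> M r c = Some a) \<and> M r j \<noteq> None)" for j
  proof
    assume "\<exists>rk\<in>bang_rows q R M c a. bang_ent M c a rk (Inl j) \<noteq> None"
    then show "\<exists>r\<in>R. (M r c = None \<or> M r c = Some a) \<and> M r j \<noteq> None"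
      by (auto simp: rows bang_ent_def)
  next
    assume "\<exists>r\<in>R. (M r c = None \<or> M r c = Some a) \<and> M r j \<noteq> None"
    then obtain r where "(r, 0) \<in> bang_rows q R M c a" "M r j \<noteq> None"
      using q_ge_2 by (auto simp: rows)
    then show "\<exists>rk\<in>bang_rows q R M c a. bang_ent M c a rk (Inl j) \<noteq> None"
      by (force simp: bang_ent_def)
  qed
  have new_col: "(\<exists>rk\<in>bang_rows q R M c a. bang_ent M c a rk (Inr r) \<noteq> None) \<longleftrightarrow> r \<in> block c a"
    for r
  proof
    assume "\<exists>rk\<in>bang_rows q R M c a. bang_ent M c a rk (Inr r) \<noteq> None"
    then show "r \<in> block c a"
      by (auto simp: rows bang_ent_def block_def split: if_splits)
  next
    assume r: "r \<in> block c a"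
    then have "(r, 0) \<in> bang_rows q R M c a"
      using q_ge_2 by (auto simp: rows block_def)
    then show "\<exists>rk\<in>bang_rows q R M c a. bang_ent M c a rk (Inr r) \<noteq> None"
      using r by (force simp: bang_ent_def block_def)
  qed
  have avoiding: "j \<in> C - {c} - cols_avoiding c a \<longleftrightarrow>
      j \<in> C - {c} \<and> (\<exists>r\<in>R. (M r c = None \<or> M r c = Some a) \<and> M r j \<noteq> None)" for j
    unfolding cols_avoiding_def support_def block_def by auto
  show ?thesis
  proof (rule set_eqI)
    fix col :: "'c + 'r"
    show "col \<in> bang_cols q R C M c a \<longleftrightarrow> col \<in> Inl ` (C - {c} - cols_avoiding c a) \<union> Inr ` block c a"
    proof (cases col)
      case (Inl j)
      show ?thesis
        unfolding Inl bang_cols_def using old_col[of j] avoiding[of j] by auto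
    next
      case (Inr r)
      show ?thesis
        unfolding Inr bang_cols_def using new_col[of r] by (auto simp: block_def)
    qed
  qed
qed

lemma card_bang_cols:
  assumes c: "c \<in> C"
  shows "card (bang_cols q R C M c a) + card (cols_avoiding c a) + 1 = card C + card (block c a)"
proof -
  have sub: "cols_avoiding c a \<subseteq> C - {c}"
    unfolding cols_avoiding_def by auto
  have "card (bang_cols q R C M c a) = card (C - {c} - cols_avoiding c a) + card (block c a)"
    unfolding bang_cols_eq by (subst card_Un_disjoint) (auto simp: card_image finite_C finite_block)
  moreover have "card (C - {c} - cols_avoiding c a) + card (cols_avoiding c a) = card (C - {c})"
    using card_Diff_subset[OF finite_subset[OF sub] sub] card_mono[OF _ sub] finite_C
    by (metis finite_Diff le_add_diff_inverse2)
  moreover have "card (C - {c}) + 1 = card C"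
    using c finite_C by (metis Suc_eq_plus1 card.remove)
  ultimately show ?thesis
    by simp
qed

definition cols_below :: "'c \<Rightarrow> 'c set" where
  "cols_below c = (\<Union>a<q. cols_avoiding c a)"

lemma finite_cols_below: "finite (cols_below c)"
  unfolding cols_below_def cols_avoiding_def using finite_C by auto

lemma cols_below_subset: "cols_below c \<subseteq> C - {c}"
  unfolding cols_below_def cols_avoiding_def by auto

lemma cols_avoiding_subset_below: "a < q \<Longrightarrow> cols_avoiding c a \<subseteq> cols_below c"
  unfolding cols_below_def by blast

lemma support_below: "j \<in> cols_below c \<Longrightarrow> support j \<subseteq> support c"
  unfolding cols_below_def cols_avoiding_def by blast

lemma notin_cols_avoiding_iff:
  "j \<in> cols_below c \<Longrightarrow> j \<notin> cols_avoiding c a \<longleftrightarrow> support j \<inter> block c a \<noteq> {}"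
  using support_below cols_below_subset unfolding cols_avoiding_def by blast

lemma card_block_ge_meeting:
  assumes c: "c \<in> C" and a: "a < q"
  shows "(q - 1) * card (cols_below c - cols_avoiding c a) + 1 \<le> card (block c a)"
proof (rule rank_bound)
  show "block c a \<subseteq> R" "block c a \<noteq> {}"
    using block_nonempty[OF c a] by (auto simp: block_def)
  show "cols_below c - cols_avoiding c a \<subseteq> C"
    using cols_below_subset by blast
  show "\<exists>r\<in>block c a. M r i \<noteq> None" if "i \<in> cols_below c - cols_avoiding c a" for i
    using that notin_cols_avoiding_iff by (auto simp: support_def)
  have "closed_under_updates q {i} (\<Union>r\<in>block c a. cell r)"
    if i: "i \<in> cols_below c" for i
  proof -
    obtain a' where "a' < q" "i \<in> C" "support i \<subseteq> support c - block c a'"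
      using i unfolding cols_below_def cols_avoiding_def by blast
    then show ?thesis
      using block_cells_closed_under_update[OF c] by blast
  qed
  then show "closed_under_updates q (cols_below c - cols_avoiding c a) (\<Union>r\<in>block c a. cell r)"
    unfolding closed_under_updates_def by blast
qed

lemma sum_card_meeting:
  "(\<Sum>a<q. card (cols_below c - cols_avoiding c a))
    = (\<Sum>j\<in>cols_below c. card {a\<in>{..<q}. support j \<inter> block c a \<noteq> {}})"
proof -
  have "card (cols_below c - cols_avoiding c a)
      = (\<Sum>j\<in>cols_below c. if support j \<inter> block c a \<noteq> {} then 1 else 0)" for a
  proof -
    have "cols_below c - cols_avoiding c a = {j \<in> cols_below c. support j \<inter> block c a \<noteq> {}}"
      using notin_cols_avoiding_iff by blast
    then show ?thesis
      using finite_cols_below by (simp add: sum.inter_filter[symmetric])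
  qed
  moreover have "card {a\<in>{..<q}. support j \<inter> block c a \<noteq> {}}
      = (\<Sum>a<q. if support j \<inter> block c a \<noteq> {} then 1 else 0)" for j
    by (simp add: sum.inter_filter[symmetric])
  ultimately show ?thesis
    by (simp add: sum.swap[of _ "{..<q}"])
qed

lemma meeting_eq_cols_within_block:
  assumes c: "c \<in> C" and a: "a < q"
    and unique: "\<And>j. j \<in> cols_below c \<Longrightarrow> card {a\<in>{..<q}. support j \<inter> block c a \<noteq> {}} = 1"
  shows "cols_below c - cols_avoiding c a = cols_within (block c a)"
proof
  show "cols_below c - cols_avoiding c a \<subseteq> cols_within (block c a)"
  proof
    fix j assume j: "j \<in> cols_below c - cols_avoiding c a"
    have "support j \<subseteq> block c a"
    proof
      fix r assume r: "r \<in> support j"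
      have "r \<in> support c"
        using support_below j r by blast
      then obtain a' where a': "a' < q" "r \<in> block c a'"
        unfolding support_eq_UN_block[OF c] by blast
      obtain a0 where "{a\<in>{..<q}. support j \<inter> block c a \<noteq> {}} = {a0}"
        using unique[of j] j card_1_singletonE by blast
      moreover have "a \<in> {a\<in>{..<q}. support j \<inter> block c a \<noteq> {}}"
        "a' \<in> {a\<in>{..<q}. support j \<inter> block c a \<noteq> {}}"
        using j notin_cols_avoiding_iff[of j c] a a' r by auto
      ultimately have "a' = a"
        by simp
      then show "r \<in> block c a"
        using a' by simp
    qed
    then show "j \<in> cols_within (block c a)"
      using j cols_below_subset by (auto simp: cols_within_def)
  qed
  show "cols_within (block c a) \<subseteq> cols_below c - cols_avoiding c a"
  proof
    fix j assume j: "j \<in> cols_within (block c a)"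
    then have j_C: "j \<in> C" and sub: "support j \<subseteq> block c a"
      by (auto simp: cols_within_def)
    obtain a' where a': "a' < q" "a' \<noteq> a"
      using other_value by blast
    have "j \<noteq> c"
      using j col_notin_cols_within_block by blast
    moreover have "support j \<subseteq> support c - block c a'"
      using sub block_subset_support[of c a] block_disjoint[OF a'(2)[symmetric], of c] by blast
    ultimately have below: "j \<in> cols_below c"
      using j_C cols_avoiding_subset_below[OF a'(1)] by (auto simp: cols_avoiding_def)
    have "support j \<inter> block c a \<noteq> {}"
      using sub support_nonempty[OF j_C] by blast
    then show "j \<in> cols_below c - cols_avoiding c a"
      using below notin_cols_avoiding_iff[OF below] by blast
  qed
qed

lemma cols_within_mono: "T \<subseteq> T' \<Longrightarrow> cols_within T \<subseteq> cols_within T'"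
  unfolding cols_within_def by blast

lemma cols_within_support_eq:
  assumes c: "c \<in> C"
    and card_within: "\<And>a. a < q \<Longrightarrow> card (cols_within (block c a)) = l"
    and card_block: "\<And>a. a < q \<Longrightarrow> card (block c a) = (q - 1) * l + 1"
  shows "cols_within (support c) = insert c (\<Union>a<q. cols_within (block c a))"
proof (rule sym, rule card_seteq[OF finite_cols_within])
  let ?A = "insert c (\<Union>a<q. cols_within (block c a))"
  show "?A \<subseteq> cols_within (support c)"
    using c cols_within_mono[OF block_subset_support] by (auto simp: cols_within_def)
  have "card (\<Union>a<q. cols_within (block c a)) = (\<Sum>a<q. card (cols_within (block c a)))"
    by (rule card_UN_disjoint) (auto simp: finite_cols_within cols_within_block_disjoint)
  then have card_A: "card ?A = q * l + 1"
    using card_within col_notin_cols_within_block finite_cols_within by simp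
  have "(q - 1) * card (cols_within (support c)) + 1 \<le> card (support c)"
    using card_cols_within_bound[of "support c"] support_nonempty[OF c]
    by (auto simp: support_def)
  also have "\<dots> = q * ((q - 1) * l + 1)"
    using card_support[OF c] card_block by simp
  also have "\<dots> = (q - 1) * card ?A + 1"
    using q_ge_2 card_A by (cases q) (auto simp: algebra_simps)
  finally show "card (cols_within (support c)) \<le> card ?A"
    using q_ge_2 by simp
qed

section \<open>Fractal trees\<close>

primrec fractal_tree :: "'r set \<Rightarrow> nat \<Rightarrow> bool" where
  "fractal_tree T 0 \<longleftrightarrow> card T = 1"
| "fractal_tree T (Suc k) \<longleftrightarrow> (\<exists>j\<in>C. support j = T \<and>
     cols_within T = insert j (\<Union>v<q. cols_within (block j v)) \<and> (\<forall>v<q. fractal_tree (block j v) k))"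

lemma fractal_tree_fractal: "fractal_tree T k \<Longrightarrow> fractal_of_depth q k M T (cols_within T)"
proof (induction k arbitrary: T)
  case 0
  then obtain r where "T = {r}"
    using card_1_singletonE by auto
  moreover have "cols_within {r} = {}"
    by (rule cols_within_card_le_1) auto
  ultimately show ?case
    using fractal_of_depth_0 by simp
next
  case (Suc k)
  then obtain j where j: "j \<in> C" "support j = T"
    and cols: "cols_within T = insert j (\<Union>v<q. cols_within (block j v))"
    and blocks: "\<And>v. v < q \<Longrightarrow> fractal_tree (block j v) k"
    by auto
  have "fractal_of_depth q (Suc k) M (\<Union>v<q. block j v) (insert j (\<Union>v<q. cols_within (block j v)))"
  proof (rule fractal_of_depth_Suc)
    show "M r j = Some v" if "r \<in> block j v" for v r
      using that by (simp add: block_def)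
    show "M r i = None" if "v \<noteq> w" "r \<in> block j v" "i \<in> cols_within (block j w)" for v w r i
    proof -
      have "r \<notin> block j w"
        using that(1,2) block_disjoint by blast
      then have "r \<notin> support i"
        using that(3) by (auto simp: cols_within_def)
      then show ?thesis
        using that(2) by (simp add: support_def block_def)
    qed
    show "cols_within (block j v) \<inter> cols_within (block j w) = {}" if "v \<noteq> w" for v w
      using cols_within_block_disjoint[OF that] .
    show "j \<notin> cols_within (block j v)" for v
      by (rule col_notin_cols_within_block)
    show "fractal_of_depth q k M (block j v) (cols_within (block j v))" if "v < q" for v
      using Suc.IH[OF blocks[OF that]] .
  qed
  then show ?case
    using support_eq_UN_block[OF j(1)] j(2) cols by simp
qed

lemma fractal_tree_card: "fractal_tree T k \<Longrightarrow> card T = q ^ k"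
  and fractal_tree_card_cols: "fractal_tree T k \<Longrightarrow> card (cols_within T) = fractal_width q k"
  using fractal_of_depth_card fractal_tree_fractal by blast+

lemma blocks_not_nested:
  assumes j: "j1 \<in> C" "j2 \<in> C" "j1 \<noteq> j2"
    and avoid1: "v' < q" "block j1 v' \<inter> support j2 = {}"
    and avoid2: "w' < q" "block j2 w' \<inter> support j1 = {}"
    and common: "v < q" "w < q" "r \<in> block j1 v" "r \<in> block j2 w"
  shows "\<not> (block j1 v \<subseteq> block j2 w \<or> block j2 w \<subseteq> block j1 v)"
proof -
  have "\<forall>r\<in>block j1 v'. M r j2 = None" "\<forall>r\<in>block j2 w'. M r j1 = None"
    using avoid1 avoid2 by (auto simp: block_def support_def)
  then show ?thesis
    using block_not_subset_block[OF j(1,2,3) common(1) avoid1(1)]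
      block_not_subset_block[OF j(2,1) j(3)[symmetric] common(2) avoid2(1)] common(3,4)
    by blast
qed

text \<open>If T1 and T2 crossed, the induction hypothesis would put every block of j1 inside T2 or
  outside it, so a block of j1 through a row outside T2 would have * in column j2, and
  symmetrically; it would also nest the blocks of j1 and j2 through a common row, which
  blocks_not_nested excludes.\<close>
lemma fractal_trees_laminar:
  "fractal_tree T1 k1 \<Longrightarrow> fractal_tree T2 k2 \<Longrightarrow> T1 \<inter> T2 \<noteq> {} \<Longrightarrow> T1 \<subseteq> T2 \<or> T2 \<subseteq> T1"
proof (induction "k1 + k2" arbitrary: T1 T2 k1 k2 rule: less_induct)
  case less
  show ?case
  proof (cases k1)
    case 0
    then obtain r where "T1 = {r}"
      using less.prems(1) card_1_singletonE by auto
    then show ?thesis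
      using less.prems(3) by auto
  next
    case (Suc k1')
    show ?thesis
    proof (cases k2)
      case 0
      then obtain r where "T2 = {r}"
        using less.prems(2) card_1_singletonE by auto
      then show ?thesis
        using less.prems(3) by auto
    next
      case (Suc k2')
      obtain j1 where j1: "j1 \<in> C" "support j1 = T1" "\<And>v. v < q \<Longrightarrow> fractal_tree (block j1 v) k1'"
        using less.prems(1) \<open>k1 = Suc k1'\<close> by auto
      obtain j2 where j2: "j2 \<in> C" "support j2 = T2" "\<And>w. w < q \<Longrightarrow> fractal_tree (block j2 w) k2'"
        using less.prems(2) \<open>k2 = Suc k2'\<close> by auto
      show ?thesis
      proof (rule ccontr)
        assume crossing: "\<not> (T1 \<subseteq> T2 \<or> T2 \<subseteq> T1)"
        have inside1: "block j1 v \<subseteq> T2" if "v < q" "block j1 v \<inter> T2 \<noteq> {}" for v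
          using less.hyps[OF _ j1(3)[OF that(1)] less.prems(2) that(2)] crossing
            block_subset_support[of j1 v] j1(2) \<open>k1 = Suc k1'\<close> by auto
        have inside2: "block j2 w \<subseteq> T1" if "w < q" "block j2 w \<inter> T1 \<noteq> {}" for w
          using less.hyps[OF _ j2(3)[OF that(1)] less.prems(1)] that(2) crossing
            block_subset_support[of j2 w] j2(2) \<open>k2 = Suc k2'\<close> by (auto simp: Int_commute)
        obtain r1 v' where r1: "r1 \<in> T1 - T2" "v' < q" "r1 \<in> block j1 v'"
          using crossing support_eq_UN_block[OF j1(1)] j1(2) by blast
        obtain r2 w' where r2: "r2 \<in> T2 - T1" "w' < q" "r2 \<in> block j2 w'"
          using crossing support_eq_UN_block[OF j2(1)] j2(2) by blast
        obtain r v w where r: "v < q" "w < q" "r \<in> block j1 v" "r \<in> block j2 w"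
          using less.prems(3) support_eq_UN_block j1(1,2) j2(1,2) by blast
        have "block j1 v \<subseteq> block j2 w \<or> block j2 w \<subseteq> block j1 v"
          using less.hyps[OF _ j1(3)[OF r(1)] j2(3)[OF r(2)]] r \<open>k1 = Suc k1'\<close> \<open>k2 = Suc k2'\<close>
          by auto
        moreover have "j1 \<noteq> j2"
          using crossing j1(2) j2(2) by auto
        moreover have "block j1 v' \<inter> support j2 = {}"
          using inside1[OF r1(2)] r1 j2(2) by blast
        moreover have "block j2 w' \<inter> support j1 = {}"
          using inside2[OF r2(2)] r2 j1(2) by blast
        ultimately show False
          using blocks_not_nested[OF j1(1) j2(1) _ r1(2) _ r2(2) _ r] by blast
      qed
    qed
  qed
qed

end

section \<open>Non-expandable partitions\<close>

locale nonexpandable_partition = primitive_partition +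
  assumes nonexpandable: "\<not> expandable q R C M"
begin

lemma card_block_le:
  assumes "c \<in> C" "a < q"
  shows "card (block c a) \<le> card (cols_avoiding c a) + 1"
proof -
  have "card (bang_cols q R C M c a) \<le> card C"
    using nonexpandable assms unfolding expandable_def by (meson not_less)
  then show ?thesis
    using card_bang_cols[OF assms(1), of a] by linarith
qed

lemma q_card_meeting_le:
  assumes c: "c \<in> C" and a: "a < q"
  shows "q * card (cols_below c - cols_avoiding c a) \<le> card (cols_below c)"
proof -
  let ?m = "card (cols_below c - cols_avoiding c a)"
  have "?m + card (cols_avoiding c a) = card (cols_below c)"
    using card_Diff_subset[OF _ cols_avoiding_subset_below[OF a, of c]]
      card_mono[OF finite_cols_below[of c] cols_avoiding_subset_below[OF a, of c]]
      finite_subset[OF cols_avoiding_subset_below[OF a, of c] finite_cols_below[of c]]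
    by simp
  moreover have "q * ?m = (q - 1) * ?m + ?m"
    using q_ge_2 by (cases q) auto
  ultimately show ?thesis
    using card_block_ge_meeting[OF c a] card_block_le[OF c a] by linarith
qed

lemma card_meeting_blocks_eq_1:
  assumes c: "c \<in> C" and j: "j \<in> cols_below c"
  shows "card {a\<in>{..<q}. support j \<inter> block c a \<noteq> {}} = 1"
proof -
  let ?t = "\<lambda>j. card {a\<in>{..<q}. support j \<inter> block c a \<noteq> {}}"
  have t_pos: "1 \<le> ?t j'" if j': "j' \<in> cols_below c" for j'
  proof -
    obtain r where "r \<in> support j'"
      using support_nonempty cols_below_subset j' by blast
    then have "r \<in> support c"
      using support_below j' by blast
    then obtain a where "a < q" "r \<in> block c a"
      unfolding support_eq_UN_block[OF c] by blast
    then have "{a\<in>{..<q}. support j' \<inter> block c a \<noteq> {}} \<noteq> {}"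
      using \<open>r \<in> support j'\<close> by blast
    then show ?thesis
      by (simp add: Suc_le_eq card_gt_0_iff)
  qed
  have "q * (\<Sum>a<q. card (cols_below c - cols_avoiding c a)) \<le> q * card (cols_below c)"
    using sum_mono[of "{..<q}" "\<lambda>a. q * card (cols_below c - cols_avoiding c a)" "\<lambda>_. card (cols_below c)"]
      q_card_meeting_le[OF c] by (simp add: sum_distrib_left)
  then have "(\<Sum>j\<in>cols_below c. ?t j) \<le> (\<Sum>j\<in>cols_below c. 1)"
    using q_ge_2 sum_card_meeting by simp
  then show ?thesis
    using eq_if_le_and_sum_le[OF finite_cols_below[of c], where f = "\<lambda>_. 1" and g = ?t] t_pos j by simp
qed

lemma card_meeting_eq:
  assumes c: "c \<in> C" and a: "a < q"
  shows "q * card (cols_below c - cols_avoiding c a) = card (cols_below c)"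
proof -
  have "(\<Sum>a<q. card (cols_below c - cols_avoiding c a)) = card (cols_below c)"
    using sum_card_meeting card_meeting_blocks_eq_1[OF c] by simp
  then have "(\<Sum>a<q. card (cols_below c)) \<le> (\<Sum>a<q. q * card (cols_below c - cols_avoiding c a))"
    by (simp add: sum_distrib_left[symmetric])
  then show ?thesis
    using eq_if_le_and_sum_le[where A = "{..<q}" and f = "\<lambda>a. q * card (cols_below c - cols_avoiding c a)"
        and g = "\<lambda>_. card (cols_below c)"] q_card_meeting_le[OF c] a by simp
qed

text \<open>Non-expandability caps each block of c from above, the rank bound from below, and a
  double count of the columns below c shows that both bounds are attained.\<close>
lemma block_structure:
  assumes c: "c \<in> C"
  obtains l where "\<And>a. a < q \<Longrightarrow> card (cols_within (block c a)) = l"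
    and "\<And>a. a < q \<Longrightarrow> card (block c a) = (q - 1) * l + 1"
    and "cols_within (support c) = insert c (\<Union>a<q. cols_within (block c a))"
proof -
  define l where "l = card (cols_below c) div q"
  have meeting: "cols_below c - cols_avoiding c a = cols_within (block c a)" if "a < q" for a
    using meeting_eq_cols_within_block[OF c that card_meeting_blocks_eq_1[OF c]] .
  have card_within: "card (cols_within (block c a)) = l" if a: "a < q" for a
  proof -
    have "q * card (cols_within (block c a)) = card (cols_below c)"
      using card_meeting_eq[OF c a] unfolding meeting[OF a] .
    then show ?thesis
      unfolding l_def using q_ge_2 by (metis nonzero_mult_div_cancel_left not_numeral_le_zero)
  qed
  have card_block: "card (block c a) = (q - 1) * l + 1" if a: "a < q" for a
  proof -
    have "card (cols_avoiding c a) + l = q * l"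
      using card_meeting_eq[OF c a] card_within[OF a] meeting[OF a]
        card_Diff_subset[OF _ cols_avoiding_subset_below[OF a, of c]]
        card_mono[OF finite_cols_below[of c] cols_avoiding_subset_below[OF a, of c]]
        finite_subset[OF cols_avoiding_subset_below[OF a, of c] finite_cols_below[of c]]
      by simp
    moreover have "q * l = (q - 1) * l + l"
      using q_ge_2 by (cases q) auto
    ultimately show ?thesis
      using card_block_ge_meeting[OF c a] card_block_le[OF c a] card_within[OF a] meeting[OF a]
      by simp
  qed
  show thesis
    using that card_within card_block cols_within_support_eq[OF c card_within card_block] by blast
qed

text \<open>Take a column j within the block whose support is maximal. By laminarity every column
  within the block lies within support j or within the rest Y of the block; if Y were nonempty,
  the rank bound on Y and the exact count on the fractal tree support j would leave too few
  columns for the block.\<close>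
lemma block_fractal_tree:
  assumes c: "c \<in> C" and b: "b < q"
    and card_cols: "card (cols_within (block c b)) = l"
    and card_block: "card (block c b) = (q - 1) * l + 1"
    and IH: "\<And>j. j \<in> cols_within (block c b) \<Longrightarrow> \<exists>k. fractal_tree (support j) (Suc k)"
  shows "\<exists>k. fractal_tree (block c b) k"
proof (cases "l = 0")
  case True
  then show ?thesis
    using card_block by (intro exI[of _ 0]) simp
next
  case False
  let ?P = "cols_within (block c b)"
  have "?P \<noteq> {}"
    using False card_cols by auto
  then have "finite (support ` ?P)" "support ` ?P \<noteq> {}"
    using finite_cols_within by auto
  from finite_has_maximal[OF this] obtain j where j: "j \<in> ?P"
    and maximal: "\<And>j'. j' \<in> ?P \<Longrightarrow> support j \<subseteq> support j' \<Longrightarrow> support j = support j'"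
    by blast
  obtain k where tree: "fractal_tree (support j) (Suc k)"
    using IH[OF j] by blast
  have sub: "support j \<subseteq> block c b"
    using j by (simp add: cols_within_def)
  define Y where "Y = block c b - support j"
  show ?thesis
  proof (cases "Y = {}")
    case True
    then have "support j = block c b"
      using sub unfolding Y_def by blast
    then show ?thesis
      using tree by metis
  next
    case False
    have cover: "?P \<subseteq> cols_within (support j) \<union> cols_within Y"
    proof
      fix j' assume j': "j' \<in> ?P"
      obtain k' where tree': "fractal_tree (support j') (Suc k')"
        using IH[OF j'] by blast
      have "support j' \<subseteq> support j \<or> support j' \<subseteq> Y"
      proof (cases "support j \<inter> support j' = {}")
        case True
        then show ?thesis
          using j' unfolding Y_def cols_within_def by blast
      next
        case False
        then show ?thesis
          using fractal_trees_laminar[OF tree tree' False] maximal[OF j'] by blast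
      qed
      then show "j' \<in> cols_within (support j) \<union> cols_within Y"
        using j' by (auto simp: cols_within_def)
    qed
    have "l \<le> card (cols_within (support j) \<union> cols_within Y)"
      using card_mono[OF _ cover] finite_cols_within card_cols by simp
    also have "\<dots> \<le> card (cols_within (support j)) + card (cols_within Y)"
      by (rule card_Un_le)
    finally have "(q - 1) * l \<le> (q - 1) * card (cols_within (support j)) + (q - 1) * card (cols_within Y)"
      unfolding add_mult_distrib2[symmetric] by (rule mult_le_mono2)
    moreover have "(q - 1) * card (cols_within (support j)) + 1 = card (support j)"
      unfolding fractal_tree_card[OF tree] fractal_tree_card_cols[OF tree]
      by (rule fractal_width_eq) (use q_ge_2 in simp)
    moreover have "(q - 1) * card (cols_within Y) + 1 \<le> card Y"
      using card_cols_within_bound[OF _ False] by (auto simp: Y_def block_def)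
    moreover have "card (support j) + card Y = card (block c b)"
      using card_Diff_subset[OF finite_support sub] card_mono[OF finite_block sub] by (simp add: Y_def)
    ultimately show ?thesis
      using card_block by linarith
  qed
qed

lemma column_fractal_tree: "c \<in> C \<Longrightarrow> \<exists>k. fractal_tree (support c) (Suc k)"
proof (induction "card (support c)" arbitrary: c rule: less_induct)
  case less
  obtain l where card_cols: "\<And>a. a < q \<Longrightarrow> card (cols_within (block c a)) = l"
    and card_block: "\<And>a. a < q \<Longrightarrow> card (block c a) = (q - 1) * l + 1"
    and cols: "cols_within (support c) = insert c (\<Union>a<q. cols_within (block c a))"
    using block_structure[OF less.prems] by blast
  have "\<exists>k. fractal_tree (block c b) k" if b: "b < q" for b
  proof (rule block_fractal_tree[OF less.prems b card_cols[OF b] card_block[OF b]])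
    fix j assume "j \<in> cols_within (block c b)"
    then have "j \<in> C" "support j \<subset> support c"
      using support_not_subset_block[OF less.prems] block_subset_support[of c b]
      by (auto simp: cols_within_def)
    then show "\<exists>k. fractal_tree (support j) (Suc k)"
      using less.hyps psubset_card_mono[OF finite_support] by blast
  qed
  then have "\<forall>b. \<exists>k. b < q \<longrightarrow> fractal_tree (block c b) k"
    by blast
  from choice[OF this] obtain k where k: "\<And>b. b < q \<Longrightarrow> fractal_tree (block c b) (k b)"
    by blast
  have same_depth: "k b = k 0" if "b < q" for b
  proof -
    have "q ^ k b = card (block c b)"
      using fractal_tree_card[OF k[OF that]] by simp
    also have "\<dots> = card (block c 0)"
      using card_block that q_ge_2 by simp
    also have "\<dots> = q ^ k 0"
      using fractal_tree_card[OF k] q_ge_2 by simp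
    finally show ?thesis
      using q_ge_2 by simp
  qed
  have "\<forall>b<q. fractal_tree (block c b) (k 0)"
  proof (intro allI impI)
    fix b assume "b < q"
    then show "fractal_tree (block c b) (k 0)"
      using k[of b] same_depth[of b] by simp
  qed
  then have "fractal_tree (support c) (Suc (k 0))"
    unfolding fractal_tree.simps(2) using less.prems cols by blast
  then show ?case
    by blast
qed

lemma transfractal_support:
  assumes "fractal_tree (support c) (Suc k)"
  shows "transfractal q R C M (support c) (cols_within (support c))"
  unfolding transfractal_def
proof (intro conjI)
  show "support c \<subseteq> R" "cols_within (support c) \<subseteq> C"
    by (auto simp: support_def cols_within_def)
  show "is_fractal q M (support c) (cols_within (support c))"
    unfolding is_fractal_iff using fractal_tree_fractal[OF assms] by (intro exI[of _ "Suc k"]) simp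
  show "\<forall>j\<in>cols_within (support c). \<forall>r\<in>R - support c. M r j = None"
  proof (intro ballI)
    fix j r assume "j \<in> cols_within (support c)" "r \<in> R - support c"
    then have "r \<in> R - support j"
      by (auto simp: cols_within_def)
    then show "M r j = None"
      by (simp add: support_def)
  qed
qed

lemma leading_column_support:
  assumes c: "c \<in> C"
  shows "leading_column M (support c) (cols_within (support c)) c"
  unfolding leading_column_def
proof (intro conjI ballI impI)
  obtain l where cols: "cols_within (support c) = insert c (\<Union>a<q. cols_within (block c a))"
    using block_structure[OF c] by blast
  show "c \<in> cols_within (support c)"
    using c by (simp add: cols_within_def)
  show "M r c \<noteq> None" if "r \<in> support c" for r
    using that by (simp add: support_def)
  fix c' assume c': "c' \<in> cols_within (support c)" and full: "\<forall>r\<in>support c. M r c' \<noteq> None"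
  show "c' = c"
  proof (rule ccontr)
    assume "c' \<noteq> c"
    then obtain a where "support c' \<subseteq> block c a"
      using c' cols by (auto simp: cols_within_def)
    moreover have "support c \<subseteq> support c'"
      using full by (auto simp: support_def)
    ultimately show False
      using support_not_subset_block[OF c] by blast
  qed
qed

end

theorem lemma5:
  fixes q m n :: nat and M :: "nat \<Rightarrow> nat \<Rightarrow> nat option"
  assumes "q \<ge> 2"
    and "star_partition q {..<m} {..<n} M"
    and "A_primitive {..<m} {..<n} M"
    and "equal_dimension {..<m} {..<n} M"
    and "\<not> expandable q {..<m} {..<n} M"
    and "c < n"
  shows "(\<exists>k. card {r\<in>{..<m}. M r c \<noteq> None} = q ^ k) \<and>
         (\<exists>R' C'. transfractal q {..<m} {..<n} M R' C' \<and> R' = {r\<in>{..<m}. M r c \<noteq> None} \<and>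
                  leading_column M R' C' c)"
proof -
  interpret nonexpandable_partition q "{..<m}" "{..<n}" M
    using assms(1,2,3,5) by unfold_locales auto
  have c: "c \<in> {..<n}"
    using assms(6) by simp
  obtain k where tree: "fractal_tree (support c) (Suc k)"
    using column_fractal_tree[OF c] by blast
  have support: "support c = {r\<in>{..<m}. M r c \<noteq> None}"
    by (simp add: support_def)
  show ?thesis
    using fractal_tree_card[OF tree] transfractal_support[OF tree] leading_column_support[OF c]
    unfolding support by blast
qed

end
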